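(* Let $d\in\mathbb{N}$, $\kappa\in(0,\infty)$, and let $\mathfrak{l}\colon\mathbb{R}^d\times\mathbb{R}^d\to\mathbb{R}$ satisfy $\mathfrak{l}(\theta,\vartheta)=\frac{\kappa}{2}\|\theta-\vartheta\|^2$ for all $\theta,\vartheta\in\mathbb{R}^d$. Let $\gamma\in(0,\kappa^{-1})$, let $(\Omega,\mathcal{F},\mathbb{P})$ be a probability space, let $X_{n,m}\colon\Omega\to\mathbb{R}^d$, $(n,m)\in\mathbb{Z}^2$, be non-degenerate i.i.d. random variables, let $M,\mathfrak{M}\in\mathbb{N}$, and let $\Theta\colon\mathbb{N}_0\times\Omega\to\mathbb{R}^d$ satisfy for all $n\in\mathbb{N}$ $$\Theta_n=\Theta_{n-1}-\frac{\gamma}{M}\Big[\sum_{m=1}^M(\nabla_\theta\mathfrak{l})(\Theta_{n-1},X_{n,m})\Big].$$ Assume $\sup_{n,m\in\mathbb{Z}}\|X_{n,m}(\omega)\|<\infty$ for every $\omega\in\Omega$, that $(X_{n,m})_{(n,m)\in\mathbb{Z}^2}$ and $\Theta_0$ are independent, and let $N\in\mathbb{N}$. Then $$\mathbb{P}\Big(\bigcup_{n=N}^\infty\Big\{\sum_{m=1}^{\mathfrak{M}}\mathfrak{l}(\Theta_n,X_{n,-m})>\sum_{m=1}^{\mathfrak{M}}\mathfrak{l}(\Theta_{n-1},X_{n,-m})\Big\}\Big)=1.$$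
   Context: $\|\cdot\|$ is the Euclidean norm; $\nabla_\theta\mathfrak{l}$ is the gradient in the first argument. For a Borel measure $\mu$ on $\mathbb{R}^d$, $\operatorname{supp}(\mu)=\{x\in\mathbb{R}^d\colon\mu(B)>0\text{ for every open }B\ni x\}$; for a random variable $X$, $\operatorname{supp}(X)=\operatorname{supp}(\mathbb{P}_X)$ with $\mathbb{P}_X$ its law; $X$ is non-degenerate if the interior of $\operatorname{supp}(X)$ is non-empty. *)

theory Defs
  imports "HOL-Probability.Probability"
begin

definition grad1 :: "('a::euclidean_space \<Rightarrow> 'b \<Rightarrow> real) \<Rightarrow> 'a \<Rightarrow> 'b \<Rightarrow> 'a" where
  "grad1 l \<theta> \<phi> = (THE g. ((\<lambda>t. l t \<phi>) has_derivative (\<lambda>h. g \<bullet> h)) (at \<theta>))"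

definition msupp :: "'a::topological_space measure \<Rightarrow> 'a set" where
  "msupp \<mu> = {x. \<forall>B. open B \<longrightarrow> x \<in> B \<longrightarrow> emeasure \<mu> B > 0}"

definition rv_supp :: "'w measure \<Rightarrow> ('w \<Rightarrow> 'a::topological_space) \<Rightarrow> 'a set" where
  "rv_supp P X = msupp (distr P borel X)"

definition non_degenerate :: "'w measure \<Rightarrow> ('w \<Rightarrow> 'a::topological_space) \<Rightarrow> bool" where
  "non_degenerate P X \<longleftrightarrow> interior (rv_supp P X) \<noteq> {}"

end

theory Submission
  imports Defs
begin

text \<open>For the quadratic loss an SGD step is the relaxation
  \<open>\<Theta> n = (1 - \<gamma>\<kappa>) \<Theta> (n - 1) + \<gamma>\<kappa> Z n\<close> towards the batch mean
  \<open>Z n\<close>, so every path stays bounded. Pick two distinct points \<open>a\<close>, \<open>b\<close> of the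
  support. If for \<open>L\<close> consecutive steps all training samples lie near \<open>a\<close>, the
  iterate is pulled close to \<open>a\<close> (\<open>L\<close> depending only on the bound of the path); if the
  next batch then lies near \<open>b\<close> while the test samples lie near \<open>a\<close>, this step
  moves the iterate away from every test sample, so the test loss increases. For fixed
  \<open>L\<close> such windows fill disjoint blocks of the i.i.d. array, each with the same
  positive probability, so almost surely one of them occurs after time \<open>N\<close>.\<close>

lemma grad1_half_sq_dist:
  fixes l :: "'a::euclidean_space \<Rightarrow> 'a \<Rightarrow> real"
  assumes loss: "\<And>\<theta> \<phi>. l \<theta> \<phi> = \<kappa> / 2 * (norm (\<theta> - \<phi>))\<^sup>2"
  shows "grad1 l \<theta> \<phi> = \<kappa> *\<^sub>R (\<theta> - \<phi>)"
  unfolding grad1_def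
proof (rule the_equality)
  have "((\<lambda>t. \<kappa> / 2 * ((t - \<phi>) \<bullet> (t - \<phi>))) has_derivative
      (\<lambda>h. \<kappa> / 2 * (h \<bullet> (\<theta> - \<phi>) + (\<theta> - \<phi>) \<bullet> h))) (at \<theta>)"
    by (auto intro!: derivative_eq_intros)
  then show deriv: "((\<lambda>t. l t \<phi>) has_derivative (\<lambda>h. (\<kappa> *\<^sub>R (\<theta> - \<phi>)) \<bullet> h)) (at \<theta>)"
    by (simp add: loss power2_norm_eq_inner inner_commute algebra_simps)
  fix g assume "((\<lambda>t. l t \<phi>) has_derivative (\<lambda>h. g \<bullet> h)) (at \<theta>)"
  from has_derivative_unique[OF this deriv]
  have "(g - \<kappa> *\<^sub>R (\<theta> - \<phi>)) \<bullet> h = 0" for h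
    by (metis inner_diff_left right_minus_eq)
  from this[of "g - \<kappa> *\<^sub>R (\<theta> - \<phi>)"] show "g = \<kappa> *\<^sub>R (\<theta> - \<phi>)"
    by simp
qed

lemma sgd_step_half_sq_dist:
  fixes l :: "'a::euclidean_space \<Rightarrow> 'a \<Rightarrow> real" and x :: "'i \<Rightarrow> 'a"
  assumes loss: "\<And>\<theta> \<phi>. l \<theta> \<phi> = \<kappa> / 2 * (norm (\<theta> - \<phi>))\<^sup>2"
    and I: "finite I" "I \<noteq> {}"
  shows "\<theta> - (\<gamma> / real (card I)) *\<^sub>R (\<Sum>i\<in>I. grad1 l \<theta> (x i))
       = (1 - \<gamma> * \<kappa>) *\<^sub>R \<theta> + (\<gamma> * \<kappa>) *\<^sub>R ((1 / real (card I)) *\<^sub>R (\<Sum>i\<in>I. x i))"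
proof -
  have grad_sum: "(\<Sum>i\<in>I. grad1 l \<theta> (x i)) = \<kappa> *\<^sub>R (real (card I) *\<^sub>R \<theta> - (\<Sum>i\<in>I. x i))"
    by (simp add: grad1_half_sq_dist[OF loss] sum_subtractf sum_constant_scaleR flip: scaleR_diff_right scaleR_sum_right)
  show ?thesis
    unfolding grad_sum using I by (simp add: algebra_simps)
qed

lemma mean_in_convex:
  fixes x :: "'i \<Rightarrow> 'a::real_vector"
  assumes "convex S" "finite I" "I \<noteq> {}" "\<And>i. i \<in> I \<Longrightarrow> x i \<in> S"
  shows "(1 / real (card I)) *\<^sub>R (\<Sum>i\<in>I. x i) \<in> S"
  using convex_sum[OF assms(2,1), of "\<lambda>_. 1 / real (card I)" x] assms
  by (simp add: scaleR_sum_right)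

lemma relaxation_dist_le:
  fixes \<theta> Z :: "nat \<Rightarrow> 'a::real_normed_vector"
  assumes step: "\<And>n. \<theta> (Suc n) = (1 - c) *\<^sub>R \<theta> n + c *\<^sub>R Z (Suc n)"
    and c: "0 \<le> c" "c \<le> 1" and \<delta>: "0 \<le> \<delta>" and R: "dist (\<theta> r) a \<le> R"
    and near: "\<And>t. t < L \<Longrightarrow> Z (Suc r + t) \<in> cball a \<delta>"
  shows "dist (\<theta> (r + L)) a \<le> (1 - c) ^ L * R + \<delta>"
  using near
proof (induction L)
  case 0
  then show ?case using R \<delta> by simp
next
  case (Suc L)
  have "\<theta> (r + Suc L) - a = (1 - c) *\<^sub>R (\<theta> (r + L) - a) + c *\<^sub>R (Z (Suc r + L) - a)"
    using step[of "r + L"] by (simp add: algebra_simps)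
  then have "dist (\<theta> (r + Suc L)) a \<le> (1 - c) * dist (\<theta> (r + L)) a + c * dist (Z (Suc r + L)) a"
    using c norm_triangle_ineq[of "(1 - c) *\<^sub>R (\<theta> (r + L) - a)" "c *\<^sub>R (Z (Suc r + L) - a)"]
    by (simp add: dist_norm)
  also have "\<dots> \<le> (1 - c) * ((1 - c) ^ L * R + \<delta>) + c * \<delta>"
    using Suc c by (intro add_mono mult_left_mono) (auto simp: dist_commute)
  also have "\<dots> = (1 - c) ^ Suc L * R + \<delta>"
    by (simp add: algebra_simps)
  finally show ?case .
qed

lemma relaxation_bounded:
  fixes \<theta> Z :: "nat \<Rightarrow> 'a::real_normed_vector"
  assumes step: "\<And>n. \<theta> (Suc n) = (1 - c) *\<^sub>R \<theta> n + c *\<^sub>R Z (Suc n)"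
    and c: "0 \<le> c" "c \<le> 1" and bdd: "bounded (range Z)"
  shows "bounded (range \<theta>)"
proof -
  obtain B where B: "0 < B" "\<And>n. norm (Z n) \<le> B"
    using bdd unfolding bounded_pos by auto
  have "dist 0 (\<theta> n) \<le> norm (\<theta> 0) + B" for n
  proof -
    have "dist (\<theta> n) 0 \<le> (1 - c) ^ n * norm (\<theta> 0) + B"
      using relaxation_dist_le[where \<theta>=\<theta> and Z=Z, OF step c, of B 0 0 "norm (\<theta> 0)" n] B by simp
    moreover have "(1 - c) ^ n * norm (\<theta> 0) \<le> norm (\<theta> 0)"
      using c by (simp add: mult_left_le_one_le power_le_one)
    ultimately show ?thesis
      by (simp add: dist_commute)
  qed
  then show ?thesis
    unfolding bounded_any_center[of _ 0] by blast
qed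

lemma convex_step_moves_away:
  fixes \<theta> z x a b :: "'a::real_normed_vector"
  assumes c: "0 < c" "c < 1" and \<delta>: "\<delta> = c * dist a b / 16"
    and \<theta>: "dist \<theta> a \<le> 2 * \<delta>" and z: "z \<in> ball b \<delta>" and x: "x \<in> ball a \<delta>"
  shows "dist \<theta> x < dist ((1 - c) *\<^sub>R \<theta> + c *\<^sub>R z) x"
proof -
  have "0 \<le> \<delta>"
    unfolding \<delta> using c by simp
  have \<theta>x: "dist \<theta> x < 3 * \<delta>"
    using \<theta> x dist_triangle[of \<theta> x a] by (simp add: dist_commute)
  have "dist a b \<le> dist x a + dist z x + dist z b"
    using dist_triangle[of a b x] dist_triangle[of x b z] by (simp add: dist_commute)
  then have "dist a b - 2 * \<delta> < dist z x"
    using x z by (simp add: dist_commute)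
  then have "c * (dist a b - 2 * \<delta>) < c * dist z x"
    using c by simp
  moreover have "c * (dist a b - 2 * \<delta>) = 16 * \<delta> - 2 * (c * \<delta>)"
    using \<delta> by (simp add: algebra_simps)
  moreover have "c * \<delta> \<le> \<delta>"
    using c \<open>0 \<le> \<delta>\<close> by (simp add: mult_left_le_one_le)
  moreover have "(1 - c) * dist \<theta> x \<le> dist \<theta> x"
    using c by (simp add: mult_left_le_one_le)
  moreover have "c * dist z x - (1 - c) * dist \<theta> x \<le> dist ((1 - c) *\<^sub>R \<theta> + c *\<^sub>R z) x"
  proof -
    have "(1 - c) *\<^sub>R \<theta> + c *\<^sub>R z - x = c *\<^sub>R (z - x) + (1 - c) *\<^sub>R (\<theta> - x)"
      by (simp add: algebra_simps)
    then show ?thesis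
      using c norm_diff_ineq[of "c *\<^sub>R (z - x)" "(1 - c) *\<^sub>R (\<theta> - x)"] by (simp add: dist_norm)
  qed
  ultimately show ?thesis
    using \<theta>x \<open>0 \<le> \<delta>\<close> by linarith
qed

lemma relaxation_eventually_moves_away:
  fixes \<theta> Z :: "nat \<Rightarrow> 'a::real_normed_vector"
  assumes step: "\<And>n. \<theta> (Suc n) = (1 - c) *\<^sub>R \<theta> n + c *\<^sub>R Z (Suc n)"
    and c: "0 < c" "c < 1" and bdd: "bounded (range Z)" and \<delta>: "\<delta> = c * dist a b / 16"
  obtains L where "\<And>r x. (\<And>t. t < L \<Longrightarrow> Z (Suc r + t) \<in> ball a \<delta>) \<Longrightarrow>
      Z (Suc r + L) \<in> ball b \<delta> \<Longrightarrow> x \<in> ball a \<delta> \<Longrightarrow> dist (\<theta> (r + L)) x < dist (\<theta> (Suc r + L)) x"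
proof (cases "a = b")
  case True
  then show ?thesis
    using that[of 0] \<delta> by simp
next
  case False
  then have \<delta>_pos: "\<delta> > 0"
    unfolding \<delta> using c by simp
  obtain R where R: "\<And>n. dist (\<theta> n) a \<le> R"
    using relaxation_bounded[OF step _ _ bdd] c unfolding bounded_any_center[of _ a]
    by (metis dist_commute less_imp_le rangeI)
  have "(\<lambda>L. (1 - c) ^ L * R) \<longlonglongrightarrow> 0"
    using c by (intro tendsto_mult_left_zero LIMSEQ_power_zero) auto
  then obtain L where L: "(1 - c) ^ L * R < \<delta>"
    using order_tendstoD(2)[OF _ \<delta>_pos] eventually_sequentially by (metis order_refl)
  show ?thesis
  proof (rule that[of L])
    fix r x
    assume "\<And>t. t < L \<Longrightarrow> Z (Suc r + t) \<in> ball a \<delta>" and zL: "Z (Suc r + L) \<in> ball b \<delta>"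
      and x: "x \<in> ball a \<delta>"
    then have "dist (\<theta> (r + L)) a \<le> (1 - c) ^ L * R + \<delta>"
      using c \<delta>_pos by (intro relaxation_dist_le[where \<theta>=\<theta> and Z=Z, OF step _ _ _ R]) (auto intro: less_imp_le)
    then have "dist (\<theta> (r + L)) a \<le> 2 * \<delta>"
      using L by simp
    from convex_step_moves_away[OF c \<delta> this zL x]
    show "dist (\<theta> (r + L)) x < dist (\<theta> (Suc r + L)) x"
      by (simp add: step)
  qed
qed

text \<open>Samples \<open>x (k, m)\<close> with \<open>m > 0\<close> form the training batch of step \<open>k\<close>;
  those with \<open>m < 0\<close> are the test samples on which the loss is evaluated.\<close>

definition pull_push_window ::
    "(int \<times> int \<Rightarrow> 'a::metric_space) \<Rightarrow> 'a \<Rightarrow> 'a \<Rightarrow> real \<Rightarrow> nat \<Rightarrow> nat \<Rightarrow> nat \<Rightarrow> nat \<Rightarrow> bool" where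
  "pull_push_window x a b \<delta> M MM L n \<longleftrightarrow>
     (\<forall>t<L. \<forall>m\<in>{1..int M}. x (int (n + t), m) \<in> ball a \<delta>) \<and>
     (\<forall>m\<in>{1..int M}. x (int (n + L), m) \<in> ball b \<delta>) \<and>
     (\<forall>m\<in>{1..int MM}. x (int (n + L), - m) \<in> ball a \<delta>)"

lemma minibatch_relaxation_moves_away:
  fixes \<theta> :: "nat \<Rightarrow> 'a::real_normed_vector" and x :: "int \<times> int \<Rightarrow> 'a"
  assumes step: "\<And>n. \<theta> (Suc n) = (1 - c) *\<^sub>R \<theta> n + c *\<^sub>R ((1 / real M) *\<^sub>R (\<Sum>m = 1..int M. x (int (Suc n), m)))"
    and c: "0 < c" "c < 1" and M: "M \<ge> 1" and x: "bounded (range x)" and \<delta>: "\<delta> = c * dist a b / 16"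
  obtains L where "\<And>n m. 1 \<le> n \<Longrightarrow> pull_push_window x a b \<delta> M MM L n \<Longrightarrow> m \<in> {1..int MM} \<Longrightarrow>
      dist (\<theta> (n + L - 1)) (x (int (n + L), - m)) < dist (\<theta> (n + L)) (x (int (n + L), - m))"
proof -
  define Z where "Z n = (1 / real M) *\<^sub>R (\<Sum>m = 1..int M. x (int n, m))" for n
  have Z_in: "Z n \<in> S" if "convex S" "\<And>m. m \<in> {1..int M} \<Longrightarrow> x (int n, m) \<in> S" for n S
    unfolding Z_def using mean_in_convex[OF that(1), of "{1..int M}"] that(2) M by simp
  obtain B where "\<And>i. x i \<in> cball 0 B"
    using x unfolding bounded_iff by auto
  then have "bounded (range Z)"
    using Z_in[OF convex_cball] by (metis bounded_cball bounded_subset image_subsetI)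
  then obtain L where L: "\<And>r y. (\<And>t. t < L \<Longrightarrow> Z (Suc r + t) \<in> ball a \<delta>) \<Longrightarrow>
      Z (Suc r + L) \<in> ball b \<delta> \<Longrightarrow> y \<in> ball a \<delta> \<Longrightarrow> dist (\<theta> (r + L)) y < dist (\<theta> (Suc r + L)) y"
    using relaxation_eventually_moves_away[of \<theta> c Z, OF _ c _ \<delta>] step unfolding Z_def by blast
  show ?thesis
  proof (rule that[of L])
    fix n m assume n: "1 \<le> n" and window: "pull_push_window x a b \<delta> M MM L n" and m: "m \<in> {1..int MM}"
    then have "Suc (n - 1) = n" by simp
    then show "dist (\<theta> (n + L - 1)) (x (int (n + L), - m)) < dist (\<theta> (n + L)) (x (int (n + L), - m))"
      using L[of "n - 1"] Z_in[OF convex_ball] window m unfolding pull_push_window_def by fastforce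
  qed
qed

lemma sgd_loss_increases_after_pull_push_windows:
  fixes l :: "'a::euclidean_space \<Rightarrow> 'a \<Rightarrow> real" and \<theta> :: "nat \<Rightarrow> 'a" and x :: "int \<times> int \<Rightarrow> 'a"
  assumes loss: "\<And>\<theta> \<phi>. l \<theta> \<phi> = \<kappa> / 2 * (norm (\<theta> - \<phi>))\<^sup>2" and \<kappa>: "\<kappa> > 0"
    and \<gamma>: "0 < \<gamma>" "\<gamma> < 1 / \<kappa>" and M: "M \<ge> 1" and MM: "MM \<ge> 1"
    and rec: "\<And>n. \<theta> (Suc n) = \<theta> n - (\<gamma> / real M) *\<^sub>R (\<Sum>m = 1..int M. grad1 l (\<theta> n) (x (int (Suc n), m)))"
    and x: "bounded (range x)" and N: "N \<ge> 1"
    and windows: "\<forall>L. \<exists>n\<ge>N. pull_push_window x a b (\<gamma> * \<kappa> * dist a b / 16) M MM L n"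
  shows "\<exists>n\<ge>N. (\<Sum>m = 1..int MM. l (\<theta> (n - 1)) (x (int n, - m))) < (\<Sum>m = 1..int MM. l (\<theta> n) (x (int n, - m)))"
proof -
  have c: "0 < \<gamma> * \<kappa>" "\<gamma> * \<kappa> < 1"
    using \<gamma> \<kappa> by (simp_all add: field_simps)
  have "\<theta> (Suc n) = (1 - \<gamma> * \<kappa>) *\<^sub>R \<theta> n + (\<gamma> * \<kappa>) *\<^sub>R ((1 / real M) *\<^sub>R (\<Sum>m = 1..int M. x (int (Suc n), m)))" for n
    using rec[of n] sgd_step_half_sq_dist[OF loss, of "{1..int M}"] M by simp
  then obtain L where L: "\<And>n m. 1 \<le> n \<Longrightarrow> pull_push_window x a b (\<gamma> * \<kappa> * dist a b / 16) M MM L n \<Longrightarrow>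
      m \<in> {1..int MM} \<Longrightarrow> dist (\<theta> (n + L - 1)) (x (int (n + L), - m)) < dist (\<theta> (n + L)) (x (int (n + L), - m))"
    using minibatch_relaxation_moves_away[OF _ c M x refl] by blast
  obtain n where n: "n \<ge> N" "pull_push_window x a b (\<gamma> * \<kappa> * dist a b / 16) M MM L n"
    using windows by blast
  have "(\<Sum>m = 1..int MM. l (\<theta> (n + L - 1)) (x (int (n + L), - m)))
      < (\<Sum>m = 1..int MM. l (\<theta> (n + L)) (x (int (n + L), - m)))"
    using L[OF _ n(2)] n(1) N MM \<kappa> by (intro sum_strict_mono) (auto simp: loss dist_norm power_strict_mono)
  then show ?thesis
    using n(1) by (intro exI[of _ "n + L"]) auto
qed

lemma (in prob_space) prob_INT_indep_events_eq_0:
  assumes indep: "indep_events C UNIV" and q: "\<And>j::nat. prob (C j) \<le> q" "q < 1"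
  shows "prob (\<Inter>j. C j) = 0"
proof -
  have C: "C j \<in> events" for j
    using indep by (auto simp: indep_events_def)
  have "q \<ge> 0"
    using q(1)[of 0] measure_nonneg[of M "C 0"] by linarith
  have le: "prob (\<Inter>j. C j) \<le> q ^ Suc k" for k
  proof -
    have "prob (\<Inter>j. C j) \<le> prob (\<Inter>j\<in>{..k}. C j)"
      using C by (intro finite_measure_mono) auto
    also have "\<dots> = (\<Prod>j\<in>{..k}. prob (C j))"
      using indep by (auto simp: indep_events_def)
    also have "\<dots> \<le> q ^ Suc k"
      using q(1) prod_mono[of "{..k}" "\<lambda>j. prob (C j)" "\<lambda>_. q"] by simp
    finally show ?thesis .
  qed
  have "(\<lambda>k. q ^ Suc k) \<longlonglongrightarrow> 0"
    using \<open>q \<ge> 0\<close> q(2) by (intro LIMSEQ_power_zero[THEN LIMSEQ_Suc]) auto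
  then have "prob (\<Inter>j. C j) \<le> 0"
    using le by (intro LIMSEQ_le_const) auto
  then show ?thesis
    using measure_nonneg[of M] by (simp add: order_antisym)
qed

lemma (in prob_space) AE_ex_block_success:
  fixes X :: "'i \<Rightarrow> 'a \<Rightarrow> 'b::topological_space" and J :: "nat \<Rightarrow> 'i set"
  assumes indep: "indep_vars (\<lambda>_. borel) X UNIV"
    and J: "disjoint_family J" "\<And>j. finite (J j)"
    and A: "\<And>j i. A j i \<in> sets borel"
    and p: "p > 0" "\<And>j. prob {\<omega>\<in>space M. \<forall>i\<in>J j. X i \<omega> \<in> A j i} \<ge> p"
  shows "AE \<omega> in M. \<exists>j. \<forall>i\<in>J j. X i \<omega> \<in> A j i"
proof -
  have [measurable]: "X i \<in> borel_measurable M" for i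
    using indep by (auto simp: indep_vars_def)
  note A[measurable]
  define C where "C j = {\<omega>\<in>space M. \<not> (\<forall>i\<in>J j. X i \<omega> \<in> A j i)}" for j
  have C_events: "C j \<in> events" for j
    unfolding C_def using J(2)[of j] by measurable
  have "indep_vars (\<lambda>j. PiM (J j) (\<lambda>_. borel)) (\<lambda>j \<omega>. restrict (\<lambda>i. X i \<omega>) (J j)) UNIV"
    using J(1) by (intro indep_vars_restrict[OF indep]) auto
  then have "indep_events (\<lambda>j. {\<omega>\<in>space M. (\<lambda>x. \<not> (\<forall>i\<in>J j. x i \<in> A j i)) (restrict (\<lambda>i. X i \<omega>) (J j))}) UNIV"
    by (rule indep_eventsI_indep_vars) (use J(2) in measurable)
  then have "indep_events C UNIV"
    unfolding C_def by simp
  moreover have "prob (C j) \<le> 1 - p" for j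
  proof -
    have "C j = space M - {\<omega>\<in>space M. \<forall>i\<in>J j. X i \<omega> \<in> A j i}"
      unfolding C_def by auto
    moreover have "{\<omega>\<in>space M. \<forall>i\<in>J j. X i \<omega> \<in> A j i} \<in> events"
      using J(2)[of j] by measurable
    ultimately show ?thesis
      using prob_compl p(2)[of j] by simp
  qed
  ultimately have "prob (\<Inter>j. C j) = 0"
    using p(1) prob_INT_indep_events_eq_0[of C "1 - p"] by simp
  then have "(\<Inter>j. C j) \<in> null_sets M"
    using C_events by (simp add: emeasure_eq_measure null_sets_def sets.countable_INT')
  then show ?thesis
    by (rule AE_I') (auto simp: C_def)
qed

lemma (in prob_space) prob_indep_all_ge_pow:
  assumes indep: "indep_vars N X I" and J: "finite J" "J \<subseteq> I"
    and A: "\<And>i. i \<in> J \<Longrightarrow> A i \<in> sets (N i)"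
    and q: "0 \<le> q" "\<And>i. i \<in> J \<Longrightarrow> q \<le> prob (X i -` A i \<inter> space M)"
  shows "q ^ card J \<le> prob {\<omega>\<in>space M. \<forall>i\<in>J. X i \<omega> \<in> A i}"
proof (cases "J = {}")
  case True
  then show ?thesis by (simp add: prob_space)
next
  case False
  have "q ^ card J \<le> (\<Prod>i\<in>J. prob (X i -` A i \<inter> space M))"
    using q prod_mono[of J "\<lambda>_. q"] by simp
  also have "\<dots> = prob (\<Inter>i\<in>J. X i -` A i \<inter> space M)"
    using indep_varsD[OF indep False J(1,2) A] by simp
  also have "(\<Inter>i\<in>J. X i -` A i \<inter> space M) = {\<omega>\<in>space M. \<forall>i\<in>J. X i \<omega> \<in> A i}"
    using False by auto
  finally show ?thesis .
qed

lemma (in prob_space) prob_preimage_pos_of_rv_supp: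
  assumes "X \<in> borel_measurable M" "x \<in> rv_supp M X" "open B" "x \<in> B"
  shows "prob (X -` B \<inter> space M) > 0"
proof -
  have "emeasure (distr M borel X) B > 0"
    using assms(2-4) unfolding rv_supp_def msupp_def by auto
  then show ?thesis
    using assms(1,3) by (simp add: emeasure_distr emeasure_eq_measure)
qed

lemma (in prob_space) iid_prob_all_in_balls_ge:
  fixes X :: "'i \<Rightarrow> 'a \<Rightarrow> 'b::metric_space"
  assumes indep: "indep_vars (\<lambda>_. borel) X UNIV"
    and ident: "\<And>i j. distr M borel (X i) = distr M borel (X j)"
    and supp: "a \<in> rv_supp M (X i\<^sub>0)" "b \<in> rv_supp M (X i\<^sub>0)" and \<delta>: "\<delta> > 0"
  obtains q where "q > 0" "\<And>J f. finite J \<Longrightarrow> f ` J \<subseteq> {a, b} \<Longrightarrow>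
    q ^ card J \<le> prob {\<omega>\<in>space M. \<forall>i\<in>J. X i \<omega> \<in> ball (f i) \<delta>}"
proof
  have X[measurable]: "X i \<in> borel_measurable M" for i
    using indep by (auto simp: indep_vars_def)
  define q where "q = min (prob (X i\<^sub>0 -` ball a \<delta> \<inter> space M)) (prob (X i\<^sub>0 -` ball b \<delta> \<inter> space M))"
  show "q > 0"
    unfolding q_def using prob_preimage_pos_of_rv_supp[OF X supp(1)]
      prob_preimage_pos_of_rv_supp[OF X supp(2)] \<delta> by simp
  have "q \<le> prob (X i -` ball p \<delta> \<inter> space M)" if "p \<in> {a, b}" for i p
  proof -
    have "prob (X i -` ball p \<delta> \<inter> space M) = prob (X i\<^sub>0 -` ball p \<delta> \<inter> space M)"
      using measure_distr[OF X[of i]] measure_distr[OF X[of i\<^sub>0]] ident[of i i\<^sub>0] by simp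
    then show ?thesis
      using that unfolding q_def by auto
  qed
  then show "q ^ card J \<le> prob {\<omega>\<in>space M. \<forall>i\<in>J. X i \<omega> \<in> ball (f i) \<delta>}"
    if "finite J" "f ` J \<subseteq> {a, b}" for J f
    using that \<open>q > 0\<close> by (intro prob_indep_all_ge_pow[OF indep]) auto
qed

lemma non_degenerate_obtains_distinct_supp:
  fixes X :: "'w \<Rightarrow> 'a::perfect_space"
  assumes "non_degenerate P X"
  obtains a b where "a \<noteq> b" "a \<in> rv_supp P X" "b \<in> rv_supp P X"
proof -
  obtain a where a: "a \<in> interior (rv_supp P X)"
    using assms unfolding non_degenerate_def by auto
  have "\<not> rv_supp P X \<subseteq> {a}"
    using a interior_mono[of "rv_supp P X" "{a}"] by auto
  then show ?thesis
    using a interior_subset that by blast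
qed

lemma block_index_unique:
  fixes k N j j' L :: int
  assumes "0 \<le> L"
    and "N + j * (L + 1) \<le> k" "k \<le> N + j * (L + 1) + L"
    and "N + j' * (L + 1) \<le> k" "k \<le> N + j' * (L + 1) + L"
  shows "j = j'"
proof -
  have "(k - N) div (L + 1) = i" if "N + i * (L + 1) \<le> k" "k \<le> N + i * (L + 1) + L" for i
    using that by (intro int_div_pos_eq[of _ _ _ "k - N - i * (L + 1)"]) (auto simp: algebra_simps)
  then show ?thesis
    using assms by metis
qed

definition pull_push_block :: "nat \<Rightarrow> nat \<Rightarrow> nat \<Rightarrow> nat \<Rightarrow> (int \<times> int) set" where
  "pull_push_block M MM L n = {int n..int (n + L)} \<times> {1..int M} \<union> {int (n + L)} \<times> {- int MM..-1}"

definition pull_push_target :: "'a \<Rightarrow> 'a \<Rightarrow> nat \<Rightarrow> nat \<Rightarrow> int \<times> int \<Rightarrow> 'a" where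
  "pull_push_target a b L n i = (if fst i = int (n + L) \<and> 0 < snd i then b else a)"

lemma pull_push_window_if_block:
  assumes "\<And>i. i \<in> pull_push_block M MM L n \<Longrightarrow> x i \<in> ball (pull_push_target a b L n i) \<delta>"
  shows "pull_push_window x a b \<delta> M MM L n"
  unfolding pull_push_window_def
proof (intro conjI allI impI ballI)
  fix t m assume "t < L" "m \<in> {1..int M}"
  then show "x (int (n + t), m) \<in> ball a \<delta>"
    using assms[of "(int (n + t), m)"] by (auto simp: pull_push_block_def pull_push_target_def)
next
  fix m assume "m \<in> {1..int M}"
  then show "x (int (n + L), m) \<in> ball b \<delta>"
    using assms[of "(int (n + L), m)"] by (auto simp: pull_push_block_def pull_push_target_def)
next
  fix m assume "m \<in> {1..int MM}"
  then show "x (int (n + L), - m) \<in> ball a \<delta>"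
    using assms[of "(int (n + L), - m)"] by (auto simp: pull_push_block_def pull_push_target_def)
qed

lemma (in prob_space) AE_ex_pull_push_window:
  fixes X :: "int \<times> int \<Rightarrow> 'a \<Rightarrow> 'b::metric_space"
  assumes indep: "indep_vars (\<lambda>_. borel) X UNIV"
    and ident: "\<And>i j. distr M borel (X i) = distr M borel (X j)"
    and supp: "a \<in> rv_supp M (X (0, 0))" "b \<in> rv_supp M (X (0, 0))" and \<delta>: "\<delta> > 0"
  shows "AE \<omega> in M. \<exists>n\<ge>N. pull_push_window (\<lambda>i. X i \<omega>) a b \<delta> K K' L n"
proof -
  obtain q where q: "q > 0" "\<And>J f. finite J \<Longrightarrow> f ` J \<subseteq> {a, b} \<Longrightarrow>
      q ^ card J \<le> prob {\<omega>\<in>space M. \<forall>i\<in>J. X i \<omega> \<in> ball (f i) \<delta>}"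
    using iid_prob_all_in_balls_ge[OF indep ident supp \<delta>] by blast
  define s where "s j = N + j * (L + 1)" for j :: nat
  define J where "J j = pull_push_block K K' L (s j)" for j
  define T where "T j = pull_push_target a b L (s j)" for j
  have "AE \<omega> in M. \<exists>j. \<forall>i\<in>J j. X i \<omega> \<in> ball (T j i) \<delta>"
  proof (rule AE_ex_block_success[OF indep])
    have "j = j'" if "k \<in> {int (s j)..int (s j + L)}" "k \<in> {int (s j')..int (s j' + L)}" for j j' k
      using that block_index_unique[of "int L" "int N" "int j" k "int j'"] by (simp add: s_def algebra_simps)
    moreover have "fst i \<in> {int (s j)..int (s j + L)}" if "i \<in> J j" for i j
      using that by (auto simp: J_def pull_push_block_def)
    ultimately show "disjoint_family J"
      unfolding disjoint_family_on_def by blast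
    fix j
    have "card (J j) = (L + 1) * K + K'"
      unfolding J_def pull_push_block_def by (subst card_Un_disjoint) (auto simp: nat_add_distrib)
    moreover have "finite (J j)" "T j ` J j \<subseteq> {a, b}"
      by (auto simp: J_def T_def pull_push_block_def pull_push_target_def)
    ultimately show "q ^ ((L + 1) * K + K') \<le> prob {\<omega>\<in>space M. \<forall>i\<in>J j. X i \<omega> \<in> ball (T j i) \<delta>}"
      using q(2)[of "J j" "T j"] by simp
  qed (use q(1) in \<open>auto simp: J_def pull_push_block_def\<close>)
  then show ?thesis
  proof (rule eventually_mono)
    fix \<omega> assume "\<exists>j. \<forall>i\<in>J j. X i \<omega> \<in> ball (T j i) \<delta>"
    then obtain j where "pull_push_window (\<lambda>i. X i \<omega>) a b \<delta> K K' L (s j)"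
      unfolding J_def T_def using pull_push_window_if_block[where x="\<lambda>i. X i \<omega>"] by blast
    then show "\<exists>n\<ge>N. pull_push_window (\<lambda>i. X i \<omega>) a b \<delta> K K' L n"
      unfolding s_def by (metis le_add1)
  qed
qed

theorem corollary6p15:
  fixes P :: "'w measure"
    and l :: "'a::euclidean_space \<Rightarrow> 'a \<Rightarrow> real"
    and \<kappa> \<gamma> :: real
    and X :: "int \<times> int \<Rightarrow> 'w \<Rightarrow> 'a"
    and \<Theta> :: "nat \<Rightarrow> 'w \<Rightarrow> 'a"
    and M MM N :: nat
  assumes kappa: "\<kappa> > 0"
    and loss: "\<And>\<theta> \<phi>. l \<theta> \<phi> = \<kappa> / 2 * (norm (\<theta> - \<phi>))\<^sup>2"
    and gamma: "0 < \<gamma>" "\<gamma> < 1 / \<kappa>"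
    and prob: "prob_space P"
    and indep: "prob_space.indep_vars P (\<lambda>_. borel) X UNIV"
    and ident: "\<And>i j. distr P borel (X i) = distr P borel (X j)"
    and nondeg: "\<And>i. non_degenerate P (X i)"
    and M_pos: "M \<ge> 1" and MM_pos: "MM \<ge> 1"
    and rec: "\<And>n \<omega>. n \<ge> 1 \<Longrightarrow>
       \<Theta> n \<omega> = \<Theta> (n - 1) \<omega> - (\<gamma> / real M) *\<^sub>R (\<Sum>m = 1..int M. grad1 l (\<Theta> (n - 1) \<omega>) (X (int n, m) \<omega>))"
    and bdd: "\<And>\<omega>. \<omega> \<in> space P \<Longrightarrow> bdd_above (range (\<lambda>i. norm (X i \<omega>)))"
    and theta0_rv: "\<Theta> 0 \<in> borel_measurable P"
    and indep0: "prob_space.indep_set P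
          (sigma_sets (space P) {\<Theta> 0 -` A \<inter> space P | A. A \<in> sets borel})
          (sigma_sets (space P) (\<Union>i. {X i -` A \<inter> space P | A. A \<in> sets borel}))"
    and N_pos: "N \<ge> 1"
  shows "measure P (\<Union>n\<in>{N..}. {\<omega> \<in> space P.
            (\<Sum>m = 1..int MM. l (\<Theta> n \<omega>) (X (int n, - m) \<omega>))
          > (\<Sum>m = 1..int MM. l (\<Theta> (n - 1) \<omega>) (X (int n, - m) \<omega>))}) = 1"
proof -
  interpret prob_space P
    by (rule prob)
  have [measurable]: "X i \<in> borel_measurable P" for i
    using indep by (cases i) (auto simp: indep_vars_def)
  have rec_Suc: "\<Theta> (Suc n) =
      (\<lambda>\<omega>. \<Theta> n \<omega> - (\<gamma> / real M) *\<^sub>R (\<Sum>m = 1..int M. grad1 l (\<Theta> n \<omega>) (X (int (Suc n), m) \<omega>)))" for n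
    using rec[of "Suc n"] by auto
  have [measurable]: "\<Theta> n \<in> borel_measurable P" for n
    by (induction n) (simp_all add: rec_Suc grad1_half_sq_dist[OF loss] theta0_rv)
  obtain a b where ab: "a \<noteq> b" "a \<in> rv_supp P (X (0, 0))" "b \<in> rv_supp P (X (0, 0))"
    using non_degenerate_obtains_distinct_supp[OF nondeg] by blast
  define \<delta> where "\<delta> = \<gamma> * \<kappa> * dist a b / 16"
  have "\<delta> > 0"
    using gamma kappa ab(1) by (simp add: \<delta>_def)
  \<comment> \<open>Windows of every length occur almost surely, and each path picks its length from
    its own bound.\<close>
  have AE_windows: "AE \<omega> in P. \<forall>L. \<exists>n\<ge>N. pull_push_window (\<lambda>i. X i \<omega>) a b \<delta> M MM L n"
    unfolding AE_all_countable using AE_ex_pull_push_window[OF indep ident ab(2,3) \<open>\<delta> > 0\<close>] by blast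
  have increase: "\<exists>n\<ge>N. (\<Sum>m = 1..int MM. l (\<Theta> (n - 1) \<omega>) (X (int n, - m) \<omega>))
      < (\<Sum>m = 1..int MM. l (\<Theta> n \<omega>) (X (int n, - m) \<omega>))"
    if "\<omega> \<in> space P" and windows: "\<forall>L. \<exists>n\<ge>N. pull_push_window (\<lambda>i. X i \<omega>) a b \<delta> M MM L n" for \<omega>
  proof (rule sgd_loss_increases_after_pull_push_windows[where \<theta>="\<lambda>n. \<Theta> n \<omega>",
        OF loss kappa gamma M_pos MM_pos rec_Suc[THEN fun_cong] _ N_pos])
    show "bounded (range (\<lambda>i. X i \<omega>))"
      using bdd[OF that(1)] bdd_above_norm[of "range (\<lambda>i. X i \<omega>)"] by (simp add: image_comp o_def)
  qed (use windows in \<open>simp add: \<delta>_def\<close>)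
  show ?thesis
    apply (rule prob_eq_1[THEN iffD2])
    subgoal unfolding loss by measurable
    subgoal using AE_windows AE_space by eventually_elim (use increase in blast)
    done
qed

end
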